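(* Let $p_1,p_2\ge 0$ with $p_1+p_2\le 1$, and for $(x,p)\in\mathbb{R}^2$ put $r^2=x^2+p^2$ and $$W(x,p)=\frac{1}{\pi}e^{-r^2}\Big[(1-p_1-p_2)-p_1\,(1-2r^2)+p_2\,(1-4r^2+2r^4)\Big].$$ This is the Wigner function of the state $\rho=(1-p_1-p_2)|0\rangle\langle 0|+p_1|1\rangle\langle 1|+p_2|2\rangle\langle 2|$. Let $W_0(x,p)=\frac1\pi e^{-(x^2+p^2)}$ be the Wigner function of the vacuum. If $W(x,p)\ge 0$ for all $(x,p)\in\mathbb{R}^2$, then $W_0\succ W$.
   Context: Majorization: for nonnegative integrable functions $f,g$ on a domain $\mathcal{A}$ ($\mathcal{A}=\mathbb{R}^n$ or $\mathbb{R}_+$, with Lebesgue measure), $f\succ g$ ("$f$ majorizes $g$") means $\int_{\mathcal{A}} f=\int_{\mathcal{A}} g$ and $\int_{\mathcal{A}}[f(\mathbf r)-t]_+\,d\mathbf r\ge\int_{\mathcal{A}}[g(\mathbf r)-t]_+\,d\mathbf r$ for all $t\ge 0$, where $[z]_+=\max(z,0)$. (Equivalently, $\int_{\|\mathbf r\|\le s}f^\downarrow\ge\int_{\|\mathbf r\|\le s}g^\downarrow$ for all $s\ge0$, with $f^\downarrow$ the radially decreasing rearrangement of $f$.) Fock-state Wigner functions are $W_n(x,p)=\frac{(-1)^n}{\pi}L_n(2r^2)e^{-r^2}$ with $L_n$ the Laguerre polynomials, so $L_1(u)=1-u$, $L_2(u)=1-2u+u^2/2$. *)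

theory Defs
  imports "HOL-Analysis.Analysis"
begin

definition majorizes :: "(real \<times> real \<Rightarrow> real) \<Rightarrow> (real \<times> real \<Rightarrow> real) \<Rightarrow> bool" where
  "majorizes f g \<longleftrightarrow>
     (\<forall>z. f z \<ge> 0) \<and> (\<forall>z. g z \<ge> 0) \<and>
     integrable lborel f \<and> integrable lborel g \<and>
     integral\<^sup>L lborel f = integral\<^sup>L lborel g \<and>
     (\<forall>t::real. t \<ge> 0 \<longrightarrow>
        integral\<^sup>L lborel (\<lambda>z. max (f z - t) 0) \<ge> integral\<^sup>L lborel (\<lambda>z. max (g z - t) 0))"

definition W0 :: "real \<times> real \<Rightarrow> real" where
  "W0 = (\<lambda>(x, p). (1 / pi) * exp (- (x\<^sup>2 + p\<^sup>2)))"

definition Wmix :: "real \<Rightarrow> real \<Rightarrow> real \<times> real \<Rightarrow> real" where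
  "Wmix p1 p2 = (\<lambda>(x, p). let r2 = x\<^sup>2 + p\<^sup>2 in
     (1 / pi) * exp (- r2) *
       ((1 - p1 - p2) - p1 * (1 - 2 * r2) + p2 * (1 - 4 * r2 + 2 * r2\<^sup>2)))"

end

theory Submission
  imports Defs "HOL-Real_Asymp.Real_Asymp"
begin

text \<open>
  Both Wigner functions are radial, \<open>W z = G (norm z ^ 2) / pi\<close>, with \<open>G u = exp (- u)\<close> for the
  vacuum and \<open>G u = exp (- u) * q u\<close>, \<open>q\<close> quadratic, for the mixture. Since \<open>norm z ^ 2\<close> is distributed as
  \<open>pi\<close> times Lebesgue measure on \<open>{0..}\<close>, the excess integral of \<open>W\<close> above \<open>t\<close> is that of
  \<open>G\<close> above \<open>s = pi * t\<close>. The tail \<open>T u = exp (- u) * (1 + 2 * p1 * u + 2 * p2 * u ^ 2)\<close> of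
  the mixture, i.e. the integral of \<open>G\<close> over \<open>{u..}\<close>, dominates \<open>G\<close>. Whenever
  \<open>0 \<le> G \<le> T\<close>, the excess \<open>max (G - s) 0\<close> is at most \<open>max 0 (1 - s / T) * G\<close>, which is the
  derivative of \<open>- excess s (T u)\<close> for the primitive \<open>excess s\<close> of \<open>max 0 (1 - s / x)\<close>; so
  its integral is \<open>excess s (T 0) = excess s 1\<close> whatever \<open>G\<close> is, and for the vacuum
  (\<open>G = T\<close>) both steps are equalities.
\<close>

lemma emeasure_norm_sq_less:
  fixes a :: real
  assumes "DIM('a::euclidean_space) = 2"
  shows "emeasure lborel {z::'a. norm z ^ 2 < a} = ennreal (pi * max a 0)"
proof (cases "a > 0")
  case True
  have "norm z ^ 2 < a \<longleftrightarrow> norm z < sqrt a" for z :: 'a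
    using real_sqrt_less_iff[of "norm z ^ 2" a] by simp
  then have "{z::'a. norm z ^ 2 < a} = ball 0 (sqrt a)"
    by (simp add: set_eq_iff)
  with True assms show ?thesis
    by (simp add: emeasure_ball unit_ball_vol_2 max_def)
next
  case False
  have "\<not> norm z ^ 2 < a" for z :: 'a
    using False zero_le_power2[of "norm z"] by linarith
  with False show ?thesis by (simp add: max_def)
qed

lemma distr_norm_sq_lborel:
  assumes "DIM('a::euclidean_space) = 2"
  shows "distr lborel borel (\<lambda>z::'a. norm z ^ 2) = density lborel (\<lambda>u. ennreal pi * indicator {0..} u)"
    (is "?D = ?N")
proof (rule measure_eqI_generator_eq[where E="range lessThan" and \<Omega>=UNIV and A="\<lambda>i. {..<real i}"])
  have N: "emeasure ?N {..<a} = ennreal (pi * max a 0)" for a :: real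
  proof -
    have "emeasure ?N {..<a} = (\<integral>\<^sup>+ u. ennreal pi * indicator {0..<a} u \<partial>lborel)"
      by (subst emeasure_density) (auto intro!: nn_integral_cong split: split_indicator)
    also have "\<dots> = ennreal (pi * max a 0)"
      by (subst nn_integral_cmult_indicator) (auto simp: ennreal_mult max_def)
    finally show ?thesis .
  qed
  have D: "emeasure ?D {..<a} = ennreal (pi * max a 0)" for a :: real
    using emeasure_norm_sq_less[OF assms, of a] by (simp add: emeasure_distr vimage_def)
  show "Int_stable (range lessThan :: real set set)"
  proof (clarsimp simp: Int_stable_def)
    fix a b :: real
    have "{..<a} \<inter> {..<b} = {..<min a b}" by auto
    then show "{..<a} \<inter> {..<b} \<in> range lessThan" by simp
  qed
  show "emeasure ?D X = emeasure ?N X" if "X \<in> range lessThan" for X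
    using that by (auto simp: D N)
  show "emeasure ?D {..<real i} \<noteq> \<infinity>" for i
    by (simp add: D)
  show "(\<Union>i. {..<real i}) = UNIV"
    by (auto intro: reals_Archimedean2)
qed (auto simp: borel_Iio)

lemma nn_integral_norm_sq:
  assumes "DIM('a::euclidean_space) = 2" and [measurable]: "g \<in> borel_measurable borel"
  shows "(\<integral>\<^sup>+z. g (norm z ^ 2) \<partial>(lborel :: 'a measure)) = pi * (\<integral>\<^sup>+u\<in>{0..}. g u \<partial>lborel)"
proof -
  have "(\<integral>\<^sup>+z. g (norm z ^ 2) \<partial>(lborel :: 'a measure))
      = (\<integral>\<^sup>+u. g u \<partial>distr lborel borel (\<lambda>z::'a. norm z ^ 2))"
    by (subst nn_integral_distr) auto
  also have "\<dots> = pi * (\<integral>\<^sup>+u\<in>{0..}. g u \<partial>lborel)"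
    unfolding distr_norm_sq_lborel[OF assms(1)]
    by (subst nn_integral_density) (auto simp: nn_integral_cmult[symmetric] mult_ac)
  finally show ?thesis .
qed

lemma nn_integral_norm_sq_excess:
  assumes "DIM('a::euclidean_space) = 2" and [measurable]: "F \<in> borel_measurable borel"
  shows "(\<integral>\<^sup>+z. ennreal (max (F (norm z ^ 2) / pi - t) 0) \<partial>(lborel :: 'a measure))
       = (\<integral>\<^sup>+u\<in>{0..}. ennreal (max (F u - pi * t) 0) \<partial>lborel)"
proof -
  have pointwise: "ennreal pi * ennreal (max (F u / pi - t) 0) = ennreal (max (F u - pi * t) 0)" for u
    by (simp add: ennreal_mult[symmetric] max_def field_simps)
  have "(\<integral>\<^sup>+z. ennreal (max (F (norm z ^ 2) / pi - t) 0) \<partial>(lborel :: 'a measure))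
      = pi * (\<integral>\<^sup>+u\<in>{0..}. ennreal (max (F u / pi - t) 0) \<partial>lborel)"
    by (rule nn_integral_norm_sq[OF assms(1)]) measurable
  also have "\<dots> = (\<integral>\<^sup>+u\<in>{0..}. ennreal pi * ennreal (max (F u / pi - t) 0) \<partial>lborel)"
    by (simp add: nn_integral_cmult[symmetric] mult.assoc)
  also have "\<dots> = (\<integral>\<^sup>+u\<in>{0..}. ennreal (max (F u - pi * t) 0) \<partial>lborel)"
    by (simp only: pointwise)
  finally show ?thesis .
qed

text \<open>For \<open>s = 0\<close> the junk value \<open>ln (x / 0)\<close> is multiplied by \<open>0\<close>, so \<open>excess 0 x = x\<close> for \<open>x > 0\<close>.\<close>
definition excess :: "real \<Rightarrow> real \<Rightarrow> real" where
  "excess s x = (if x \<le> s then 0 else x - s - s * ln (x / s))"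

lemma DERIV_excess:
  assumes "0 \<le> s" and "0 < x"
  shows "DERIV (excess s) x :> max 0 (1 - s / x)"
proof -
  have right: "DERIV (\<lambda>y. y - s - s * ln (y / s)) y :> 1 - s / y" if "0 < y" for y
  proof (cases "s = 0")
    case False
    with assms that show ?thesis by (auto intro!: derivative_eq_intros simp: field_simps)
  qed simp
  have "((\<lambda>y. if y \<in> {..s} then 0 else y - s - s * ln (y / s)) has_derivative
      (if x \<in> {..s} then (\<lambda>h. 0) else (*) (1 - s / x))) (at x within {..s} \<union> {s<..})"
  proof (rule has_derivative_If_within_closures)
    show "((\<lambda>y. y - s - s * ln (y / s)) has_derivative (*) (1 - s / x))
        (at x within {s<..} \<union> (closure {..s} \<inter> closure {s<..}))"
      using right[OF assms(2)] by (auto simp: has_field_derivative_def intro: has_derivative_at_withinI)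
  qed (use assms in auto)
  moreover have "(if x \<in> {..s} then (\<lambda>h. 0) else (*) (1 - s / x)) = (*) (max 0 (1 - s / x))"
    using assms by (auto simp: field_simps max_def)
  moreover have "excess s = (\<lambda>y. if y \<in> {..s} then 0 else y - s - s * ln (y / s))"
    by (auto simp: excess_def fun_eq_iff)
  moreover have "{..s} \<union> {s<..} = UNIV" by auto
  ultimately show ?thesis by (simp add: has_field_derivative_def)
qed

lemma max_diff_le_weighted:
  fixes g \<tau> s :: real
  assumes "0 \<le> g" "g \<le> \<tau>" "0 \<le> s"
  shows "max (g - s) 0 \<le> max 0 (1 - s / \<tau>) * g"
proof (cases "g \<le> s")
  case False
  then have "0 < \<tau>" "s < \<tau>" using assms by linarith+
  then have "s * g / \<tau> \<le> s" using assms by (simp add: divide_le_eq mult_left_mono)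
  then have "g - s \<le> (1 - s / \<tau>) * g" by (simp add: algebra_simps)
  moreover have "0 \<le> 1 - s / \<tau>" using \<open>0 < \<tau>\<close> \<open>s < \<tau>\<close> by simp
  ultimately show ?thesis using False by simp
qed (use assms in simp)

lemma max_diff_eq_weighted:
  fixes \<tau> s :: real
  assumes "0 < \<tau>"
  shows "max (\<tau> - s) 0 = max 0 (1 - s / \<tau>) * \<tau>"
  using assms by (auto simp: max_def field_simps)

locale survival_pair =
  fixes g T :: "real \<Rightarrow> real"
  assumes borel_measurable_g [measurable]: "g \<in> borel_measurable borel"
    and DERIV_T: "\<And>u. DERIV T u :> - g u"
    and T_0: "T 0 = 1"
    and T_tendsto_0: "(T \<longlongrightarrow> 0) at_top"
    and g_nonneg: "\<And>u. 0 \<le> u \<Longrightarrow> 0 \<le> g u"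
    and T_pos: "\<And>u. 0 \<le> u \<Longrightarrow> 0 < T u"
begin

lemma borel_measurable_T [measurable]: "T \<in> borel_measurable borel"
  using DERIV_T
  by (intro borel_measurable_continuous_onI continuous_at_imp_continuous_on) (auto intro: DERIV_isCont)

lemma nn_integral_g: "(\<integral>\<^sup>+u\<in>{0..}. g u \<partial>lborel) = 1"
proof -
  have deriv: "DERIV (\<lambda>u. - T u) u :> g u" if "0 \<le> u" for u
    using DERIV_minus[OF DERIV_T] by simp
  have lim: "((\<lambda>u. - T u) \<longlongrightarrow> 0) at_top"
    using tendsto_minus[OF T_tendsto_0] by simp
  from nn_integral_FTC_atLeast[OF borel_measurable_g deriv g_nonneg lim] show ?thesis
    by (simp add: T_0)
qed

lemma excess_T_tendsto_0:
  assumes "0 \<le> s"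
  shows "((\<lambda>u. excess s (T u)) \<longlongrightarrow> 0) at_top"
proof (cases "s = 0")
  case True
  have "eventually (\<lambda>u. T u = excess s (T u)) at_top"
    using eventually_ge_at_top[of 0]
  proof eventually_elim
    case (elim u)
    then show ?case using T_pos[OF elim] True by (simp add: excess_def)
  qed
  with T_tendsto_0 show ?thesis by (rule Lim_transform_eventually)
next
  case False
  with assms have "eventually (\<lambda>u. T u < s) at_top"
    using order_tendstoD(2)[OF T_tendsto_0] by simp
  then have "eventually (\<lambda>u. excess s (T u) = 0) at_top"
    by eventually_elim (simp add: excess_def)
  then show ?thesis by (rule tendsto_eventually)
qed

lemma nn_integral_weighted_excess:
  assumes "0 \<le> s"
  shows "(\<integral>\<^sup>+u\<in>{0..}. ennreal (max 0 (1 - s / T u) * g u) \<partial>lborel) = excess s 1"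
proof -
  have meas: "(\<lambda>u. max 0 (1 - s / T u) * g u) \<in> borel_measurable borel"
    by measurable
  have deriv: "DERIV (\<lambda>u. - excess s (T u)) u :> max 0 (1 - s / T u) * g u" if "0 \<le> u" for u
    using DERIV_minus[OF DERIV_chain2[OF DERIV_excess[OF assms T_pos[OF that]] DERIV_T]] by simp
  have nonneg: "0 \<le> max 0 (1 - s / T u) * g u" if "0 \<le> u" for u
    using g_nonneg[OF that] by simp
  have lim: "((\<lambda>u. - excess s (T u)) \<longlongrightarrow> 0) at_top"
    using tendsto_minus[OF excess_T_tendsto_0[OF assms]] by simp
  from nn_integral_FTC_atLeast[OF meas deriv nonneg lim] show ?thesis
    by (simp add: T_0)
qed

lemma nn_integral_excess_le:
  assumes g_le_T: "\<And>u. 0 \<le> u \<Longrightarrow> g u \<le> T u" and "0 \<le> s"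
  shows "(\<integral>\<^sup>+u\<in>{0..}. ennreal (max (g u - s) 0) \<partial>lborel) \<le> excess s 1"
proof -
  have "ennreal (max (g u - s) 0) * indicator {0..} u
      \<le> ennreal (max 0 (1 - s / T u) * g u) * indicator {0..} u" for u
  proof (cases "0 \<le> u")
    case True
    with max_diff_le_weighted[OF g_nonneg g_le_T \<open>0 \<le> s\<close>] show ?thesis
      by (simp add: ennreal_leI)
  qed simp
  then have "(\<integral>\<^sup>+u\<in>{0..}. ennreal (max (g u - s) 0) \<partial>lborel)
      \<le> (\<integral>\<^sup>+u\<in>{0..}. ennreal (max 0 (1 - s / T u) * g u) \<partial>lborel)"
    by (rule nn_integral_mono)
  then show ?thesis by (simp add: nn_integral_weighted_excess[OF assms(2)])
qed

end

lemma survival_pair_exp: "survival_pair (\<lambda>u. exp (- u)) (\<lambda>u. exp (- u))"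
proof
  show "((\<lambda>u::real. exp (- u)) \<longlongrightarrow> 0) at_top" by real_asymp
qed (auto intro!: derivative_eq_intros)

lemma nn_integral_exp_excess:
  assumes "0 \<le> s"
  shows "(\<integral>\<^sup>+u\<in>{0..}. ennreal (max (exp (- u) - s) 0) \<partial>lborel) = excess s 1"
  using survival_pair.nn_integral_weighted_excess[OF survival_pair_exp assms]
  by (simp add: max_diff_eq_weighted)

lemma (in survival_pair) nn_integral_excess_le_exp:
  assumes "\<And>u. 0 \<le> u \<Longrightarrow> g u \<le> T u" and "0 \<le> s"
  shows "(\<integral>\<^sup>+u\<in>{0..}. ennreal (max (g u - s) 0) \<partial>lborel)
       \<le> (\<integral>\<^sup>+u\<in>{0..}. ennreal (max (exp (- u) - s) 0) \<partial>lborel)"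
  using nn_integral_excess_le[OF assms] by (simp add: nn_integral_exp_excess[OF assms(2)])

lemma (in survival_pair) has_bochner_integral_norm_sq:
  assumes "DIM('a::euclidean_space) = 2"
  shows "has_bochner_integral (lborel :: 'a measure) (\<lambda>z. g (norm z ^ 2) / pi) 1"
proof (rule has_bochner_integral_nn_integral)
  have "(\<integral>\<^sup>+z. ennreal (g (norm z ^ 2) / pi) \<partial>(lborel :: 'a measure))
      = (\<integral>\<^sup>+z. ennreal (max (g (norm z ^ 2) / pi - 0) 0) \<partial>(lborel :: 'a measure))"
    by (simp add: g_nonneg max_absorb1)
  also have "\<dots> = (\<integral>\<^sup>+u\<in>{0..}. ennreal (max (g u - pi * 0) 0) \<partial>lborel)"
    by (rule nn_integral_norm_sq_excess[OF assms borel_measurable_g])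
  also have "\<dots> = (\<integral>\<^sup>+u\<in>{0..}. g u \<partial>lborel)"
    by (intro nn_integral_cong) (simp add: g_nonneg max_absorb1 split: split_indicator)
  finally show "(\<integral>\<^sup>+z. ennreal (g (norm z ^ 2) / pi) \<partial>(lborel :: 'a measure)) = ennreal 1"
    by (simp add: nn_integral_g)
qed (auto simp: g_nonneg)

lemma majorizesI_nn_integral:
  assumes f_nonneg: "\<And>z. 0 \<le> f z" and g_nonneg: "\<And>z. 0 \<le> g z"
    and f: "has_bochner_integral lborel f c" and g: "has_bochner_integral lborel g c"
    and excess_le: "\<And>t. 0 \<le> t \<Longrightarrow>
      (\<integral>\<^sup>+z. ennreal (max (g z - t) 0) \<partial>lborel) \<le> (\<integral>\<^sup>+z. ennreal (max (f z - t) 0) \<partial>lborel)"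
  shows "majorizes f g"
  unfolding majorizes_def
proof (intro conjI allI impI)
  show "integrable lborel f" "integrable lborel g" "integral\<^sup>L lborel f = integral\<^sup>L lborel g"
    using f g by (auto simp: has_bochner_integral_iff)
  fix t :: real
  assume "0 \<le> t"
  have integrable_excess: "integrable lborel (\<lambda>z. max (h z - t) 0)"
    if "integrable lborel h" "\<And>z. 0 \<le> h z" for h :: "real \<times> real \<Rightarrow> real"
    using that \<open>0 \<le> t\<close> by (intro Bochner_Integration.integrable_bound[OF that(1)]) (auto simp: abs_le_iff)
  have "ennreal (integral\<^sup>L lborel (\<lambda>z. max (g z - t) 0))
      = (\<integral>\<^sup>+z. ennreal (max (g z - t) 0) \<partial>lborel)"
    using integrable_excess[OF _ g_nonneg] g by (simp add: nn_integral_eq_integral has_bochner_integral_iff)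
  also have "\<dots> \<le> (\<integral>\<^sup>+z. ennreal (max (f z - t) 0) \<partial>lborel)"
    by (rule excess_le[OF \<open>0 \<le> t\<close>])
  also have "\<dots> = ennreal (integral\<^sup>L lborel (\<lambda>z. max (f z - t) 0))"
    using integrable_excess[OF _ f_nonneg] f by (simp add: nn_integral_eq_integral has_bochner_integral_iff)
  finally show "integral\<^sup>L lborel (\<lambda>z. max (g z - t) 0) \<le> integral\<^sup>L lborel (\<lambda>z. max (f z - t) 0)"
    by (simp add: integral_nonneg)
qed (use f_nonneg g_nonneg in auto)

lemma (in survival_pair) majorizes_exp_norm_sq:
  assumes g_le_T: "\<And>u. 0 \<le> u \<Longrightarrow> g u \<le> T u"
  shows "majorizes (\<lambda>z. exp (- (norm z ^ 2)) / pi) (\<lambda>z. g (norm z ^ 2) / pi)"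
proof (rule majorizesI_nn_integral)
  interpret vacuum: survival_pair "\<lambda>u. exp (- u)" "\<lambda>u. exp (- u)"
    by (rule survival_pair_exp)
  have dim: "DIM(real \<times> real) = 2" by simp
  show "has_bochner_integral lborel (\<lambda>z::real \<times> real. exp (- (norm z ^ 2)) / pi) 1"
    by (rule vacuum.has_bochner_integral_norm_sq[OF dim])
  show "has_bochner_integral lborel (\<lambda>z::real \<times> real. g (norm z ^ 2) / pi) 1"
    by (rule has_bochner_integral_norm_sq[OF dim])
  show "0 \<le> g (norm z ^ 2) / pi" for z :: "real \<times> real"
    by (simp add: g_nonneg)
  fix t :: real
  assume "0 \<le> t"
  have "(\<integral>\<^sup>+z. ennreal (max (g (norm (z :: real \<times> real) ^ 2) / pi - t) 0) \<partial>lborel)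
      = (\<integral>\<^sup>+u\<in>{0..}. ennreal (max (g u - pi * t) 0) \<partial>lborel)"
    by (rule nn_integral_norm_sq_excess[OF dim borel_measurable_g])
  also have "\<dots> \<le> (\<integral>\<^sup>+u\<in>{0..}. ennreal (max (exp (- u) - pi * t) 0) \<partial>lborel)"
    using \<open>0 \<le> t\<close> by (intro nn_integral_excess_le_exp g_le_T) simp_all
  also have "\<dots> = (\<integral>\<^sup>+z. ennreal (max (exp (- (norm (z :: real \<times> real) ^ 2)) / pi - t) 0) \<partial>lborel)"
    by (rule nn_integral_norm_sq_excess[OF dim vacuum.borel_measurable_g, symmetric])
  finally show "(\<integral>\<^sup>+z. ennreal (max (g (norm (z :: real \<times> real) ^ 2) / pi - t) 0) \<partial>lborel)
      \<le> (\<integral>\<^sup>+z. ennreal (max (exp (- (norm (z :: real \<times> real) ^ 2)) / pi - t) 0) \<partial>lborel)" .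
qed (simp add: g_nonneg)

definition mix_profile :: "real \<Rightarrow> real \<Rightarrow> real \<Rightarrow> real" where
  "mix_profile p1 p2 u = exp (- u) * ((1 - p1 - p2) - p1 * (1 - 2 * u) + p2 * (1 - 4 * u + 2 * u\<^sup>2))"

definition mix_tail :: "real \<Rightarrow> real \<Rightarrow> real \<Rightarrow> real" where
  "mix_tail p1 p2 u = exp (- u) * (1 + 2 * p1 * u + 2 * p2 * u\<^sup>2)"

lemma norm_Pair_power2: "norm (x, p) ^ 2 = x\<^sup>2 + p\<^sup>2" for x p :: real
  by (simp add: norm_Pair)

lemma Wmix_eq_mix_profile: "Wmix p1 p2 = (\<lambda>z. mix_profile p1 p2 (norm z ^ 2) / pi)"
proof
  fix z :: "real \<times> real"
  obtain x p where z: "z = (x, p)" by fastforce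
  show "Wmix p1 p2 z = mix_profile p1 p2 (norm z ^ 2) / pi"
    unfolding z norm_Pair_power2 by (simp add: Wmix_def mix_profile_def)
qed

lemma W0_eq_exp: "W0 = (\<lambda>z. exp (- (norm z ^ 2)) / pi)"
  by (auto simp: fun_eq_iff W0_def norm_Pair_power2)

lemma DERIV_mix_tail: "DERIV (mix_tail p1 p2) u :> - mix_profile p1 p2 u"
proof -
  have "DERIV (mix_tail p1 p2) u :>
      exp (- u) * (- 1) * (1 + 2 * p1 * u + 2 * p2 * u\<^sup>2) + exp (- u) * (2 * p1 + 2 * p2 * (2 * u))"
    unfolding mix_tail_def by (auto intro!: derivative_eq_intros)
  also have "exp (- u) * (- 1) * (1 + 2 * p1 * u + 2 * p2 * u\<^sup>2) + exp (- u) * (2 * p1 + 2 * p2 * (2 * u))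
      = - mix_profile p1 p2 u"
    unfolding mix_profile_def by (simp add: algebra_simps power2_eq_square)
  finally show ?thesis .
qed

lemma mix_tail_tendsto_0: "(mix_tail p1 p2 \<longlongrightarrow> 0) at_top"
proof -
  have "((\<lambda>u. exp (- u) + 2 * p1 * (u * exp (- u)) + 2 * p2 * (u\<^sup>2 * exp (- u)))
      \<longlongrightarrow> 0 + 2 * p1 * 0 + 2 * p2 * 0) at_top"
    by (intro tendsto_intros) real_asymp+
  moreover have "(\<lambda>u. exp (- u) + 2 * p1 * (u * exp (- u)) + 2 * p2 * (u\<^sup>2 * exp (- u))) = mix_tail p1 p2"
    by (auto simp: mix_tail_def algebra_simps)
  ultimately show ?thesis by simp
qed

lemma mix_profile_le_mix_tail:
  "0 \<le> p1 \<Longrightarrow> 0 \<le> p2 \<Longrightarrow> 0 \<le> u \<Longrightarrow> mix_profile p1 p2 u \<le> mix_tail p1 p2 u"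
  unfolding mix_tail_def mix_profile_def by (intro mult_left_mono) (auto simp: algebra_simps)

lemma survival_pair_mix:
  assumes "0 \<le> p1" "0 \<le> p2" and "\<And>u. 0 \<le> u \<Longrightarrow> 0 \<le> mix_profile p1 p2 u"
  shows "survival_pair (mix_profile p1 p2) (mix_tail p1 p2)"
proof
  show "mix_profile p1 p2 \<in> borel_measurable borel"
    unfolding mix_profile_def by measurable
  show "0 < mix_tail p1 p2 u" if "0 \<le> u" for u
    using assms that unfolding mix_tail_def by (intro mult_pos_pos add_pos_nonneg) auto
qed (use assms in \<open>auto simp: DERIV_mix_tail mix_tail_tendsto_0 mix_tail_def\<close>)

theorem mainTheorem1:
  fixes p1 p2 :: real
  assumes "p1 \<ge> 0" and "p2 \<ge> 0" and "p1 + p2 \<le> 1"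
    and "\<forall>x p. Wmix p1 p2 (x, p) \<ge> 0"
  shows "majorizes W0 (Wmix p1 p2)"
proof -
  have "0 \<le> mix_profile p1 p2 u" if "0 \<le> u" for u
    using assms(4)[rule_format, of "sqrt u" 0] that pi_gt_zero
    by (auto simp: Wmix_eq_mix_profile norm_Pair_power2 zero_le_divide_iff)
  then interpret mix: survival_pair "mix_profile p1 p2" "mix_tail p1 p2"
    using survival_pair_mix assms(1,2) by blast
  have "majorizes (\<lambda>z. exp (- (norm z ^ 2)) / pi) (\<lambda>z. mix_profile p1 p2 (norm z ^ 2) / pi)"
    using assms(1,2) by (intro mix.majorizes_exp_norm_sq mix_profile_le_mix_tail)
  then show ?thesis
    by (simp only: W0_eq_exp Wmix_eq_mix_profile)
qed

end
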